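(* Let $(\mathcal{S},d_{\mathcal{S}})$, $(\mathcal{A},d_{\mathcal{A}})$ be metric spaces, $\gamma\in[0,1)$, $r$ a reward function, $\pi,\pi'$ policies with $\pi'$ being $L_{\pi'}$-LC, and $p,p'$ configurations. Then $$\big\|A_{\pi,p}^{\pi',p'}\big\|_L\le\big\|A_{\pi,p}^{\pi',p}\big\|_L+(L_{\pi'}+1)\big\|A_{\pi,p}^{\pi,p'}\big\|_L.$$
   Context: $r:\mathcal{S}\times\mathcal{A}\times\mathcal{S}\to\mathbb{R}$. A configuration is a Markov kernel $p(\cdot|s,a)$ on $\mathcal{S}$; a policy is a Markov kernel $\pi(\cdot|s)$ on $\mathcal{A}$. Value functions (assumed well defined): $V_{\pi,p}(s)=\int\pi(da|s)\int p(ds'|s,a)(r(s,a,s')+\gamma V_{\pi,p}(s'))$, $Q_{\pi,p}(s,a)=\int p(ds'|s,a)(r(s,a,s')+\gamma V_{\pi,p}(s'))$, $U_{\pi,p}(s,a,s')=r(s,a,s')+\gamma V_{\pi,p}(s')$. Relative advantages: $A_{\pi,p}^{\pi',p}(s)=\int\pi'(da|s)(Q_{\pi,p}(s,a)-V_{\pi,p}(s))$; $A_{\pi,p}^{\pi,p'}(s,a)=\int p'(ds'|s,a)(U_{\pi,p}(s,a,s')-Q_{\pi,p}(s,a))$, a function on $\mathcal{S}\times\mathcal{A}$; $A_{\pi,p}^{\pi',p'}(s)=\int\pi'(da|s)\int p'(ds'|s,a)(U_{\pi,p}(s,a,s')-V_{\pi,p}(s))$. $\|\cdot\|_L$ is the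 Lipschitz semi-norm, with $\mathcal{S}\times\mathcal{A}$ carrying the metric $d_{\mathcal{S}}(s,\bar s)+d_{\mathcal{A}}(a,\bar a)$. $\mathcal{W}(\mu,\nu)=\sup_{\|f\|_L\le1}|\int f\,d(\mu-\nu)|$, and $\pi'$ is $L_{\pi'}$-LC if $\mathcal{W}(\pi'(\cdot|s),\pi'(\cdot|\bar s))\le L_{\pi'}d_{\mathcal{S}}(s,\bar s)$ for all $s,\bar s$. *)

theory Defs
  imports "HOL-Probability.Probability"
begin

definition lip_norm :: "('x::metric_space \<Rightarrow> real) \<Rightarrow> ennreal" where
  "lip_norm f = (SUP xy \<in> {(x, y). x \<noteq> y}. ennreal (\<bar>f (fst xy) - f (snd xy)\<bar> / dist (fst xy) (snd xy)))"

definition lip_norm_SA :: "('s::metric_space \<Rightarrow> 'a::metric_space \<Rightarrow> real) \<Rightarrow> ennreal" where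
  "lip_norm_SA g = (SUP z \<in> {((s, a), (t, b)). (s, a) \<noteq> (t, b)}.
      ennreal (\<bar>g (fst (fst z)) (snd (fst z)) - g (fst (snd z)) (snd (snd z))\<bar>
               / (dist (fst (fst z)) (fst (snd z)) + dist (snd (fst z)) (snd (snd z)))))"

text \<open>Wasserstein-1 distance (Kantorovich dual form).\<close>
definition wasserstein :: "'x::metric_space measure \<Rightarrow> 'x measure \<Rightarrow> ennreal" where
  "wasserstein \<mu> \<nu> = (SUP f \<in> {f. lip_norm f \<le> 1}. ennreal \<bar>(\<integral>x. f x \<partial>\<mu>) - (\<integral>x. f x \<partial>\<nu>)\<bar>)"

definition policy :: "('s \<Rightarrow> 'a::topological_space measure) \<Rightarrow> bool" where
  "policy \<pi> \<longleftrightarrow> (\<forall>s. prob_space (\<pi> s) \<and> sets (\<pi> s) = sets borel)"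

definition configuration :: "('s::topological_space \<Rightarrow> 'a \<Rightarrow> 's measure) \<Rightarrow> bool" where
  "configuration p \<longleftrightarrow> (\<forall>s a. prob_space (p s a) \<and> sets (p s a) = sets borel)"

definition lipschitz_policy :: "real \<Rightarrow> ('s::metric_space \<Rightarrow> 'a::metric_space measure) \<Rightarrow> bool" where
  "lipschitz_policy L \<pi> \<longleftrightarrow> (\<forall>s t. wasserstein (\<pi> s) (\<pi> t) \<le> ennreal (L * dist s t))"

definition value_fn ::
  "('s \<Rightarrow> 'a \<Rightarrow> 's \<Rightarrow> real) \<Rightarrow> real \<Rightarrow> ('s \<Rightarrow> 'a measure) \<Rightarrow> ('s \<Rightarrow> 'a \<Rightarrow> 's measure)
   \<Rightarrow> ('s \<Rightarrow> real) \<Rightarrow> bool" where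
  "value_fn r \<gamma> \<pi> p V \<longleftrightarrow>
     (\<forall>s a. integrable (p s a) (\<lambda>s'. r s a s' + \<gamma> * V s')) \<and>
     (\<forall>s. integrable (\<pi> s) (\<lambda>a. \<integral>s'. r s a s' + \<gamma> * V s' \<partial>p s a)) \<and>
     (\<forall>s. V s = (\<integral>a. (\<integral>s'. r s a s' + \<gamma> * V s' \<partial>p s a) \<partial>\<pi> s))"

definition Ufn :: "('s \<Rightarrow> 'a \<Rightarrow> 's \<Rightarrow> real) \<Rightarrow> real \<Rightarrow> ('s \<Rightarrow> real) \<Rightarrow> 's \<Rightarrow> 'a \<Rightarrow> 's \<Rightarrow> real" where
  "Ufn r \<gamma> V s a s' = r s a s' + \<gamma> * V s'"

definition Qfn :: "('s \<Rightarrow> 'a \<Rightarrow> 's \<Rightarrow> real) \<Rightarrow> real \<Rightarrow> ('s \<Rightarrow> 'a \<Rightarrow> 's measure) \<Rightarrow> ('s \<Rightarrow> real)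
   \<Rightarrow> 's \<Rightarrow> 'a \<Rightarrow> real" where
  "Qfn r \<gamma> p V s a = (\<integral>s'. Ufn r \<gamma> V s a s' \<partial>p s a)"

text \<open>Relative advantages, where V = V_{\<pi>,p}, Q = Q_{\<pi>,p}, U = U_{\<pi>,p}.\<close>
definition adv_policy :: "('s \<Rightarrow> 'a \<Rightarrow> 's \<Rightarrow> real) \<Rightarrow> real \<Rightarrow> ('s \<Rightarrow> 'a \<Rightarrow> 's measure) \<Rightarrow> ('s \<Rightarrow> real)
   \<Rightarrow> ('s \<Rightarrow> 'a measure) \<Rightarrow> 's \<Rightarrow> real" where
  "adv_policy r \<gamma> p V \<pi>' s = (\<integral>a. Qfn r \<gamma> p V s a - V s \<partial>\<pi>' s)"

definition adv_config :: "('s \<Rightarrow> 'a \<Rightarrow> 's \<Rightarrow> real) \<Rightarrow> real \<Rightarrow> ('s \<Rightarrow> 'a \<Rightarrow> 's measure) \<Rightarrow> ('s \<Rightarrow> real)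
   \<Rightarrow> ('s \<Rightarrow> 'a \<Rightarrow> 's measure) \<Rightarrow> 's \<Rightarrow> 'a \<Rightarrow> real" where
  "adv_config r \<gamma> p V p' s a = (\<integral>s'. Ufn r \<gamma> V s a s' - Qfn r \<gamma> p V s a \<partial>p' s a)"

definition adv_both :: "('s \<Rightarrow> 'a \<Rightarrow> 's \<Rightarrow> real) \<Rightarrow> real \<Rightarrow> ('s \<Rightarrow> real)
   \<Rightarrow> ('s \<Rightarrow> 'a measure) \<Rightarrow> ('s \<Rightarrow> 'a \<Rightarrow> 's measure) \<Rightarrow> 's \<Rightarrow> real" where
  "adv_both r \<gamma> V \<pi>' p' s = (\<integral>a. (\<integral>s'. Ufn r \<gamma> V s a s' - V s \<partial>p' s a) \<partial>\<pi>' s)"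

end

theory Submission
  imports Defs
begin

text \<open>Splitting the transition from \<open>s\<close> into the action step and the state step gives
  \<open>A\<^bsup>\<pi>',p'\<^esup>(s) = A\<^bsup>\<pi>',p\<^esup>(s) + \<integral> A\<^bsup>\<pi>,p'\<^esup>(s,a) d\<pi>'(a|s)\<close>. The first term is handled by
  subadditivity of the Lipschitz semi-norm. For the second, with \<open>k\<close> the Lipschitz constant of
  \<open>g = A\<^bsup>\<pi>,p'\<^esup>\<close> on \<open>S \<times> A\<close>, moving the integrand from \<open>g(s,\<cdot>)\<close> to \<open>g(t,\<cdot>)\<close> costs
  \<open>k d(s,t)\<close>, and moving the measure from \<open>\<pi>'(\<cdot>|s)\<close> to \<open>\<pi>'(\<cdot>|t)\<close> costs at most
  \<open>k W(\<pi>'(\<cdot>|s), \<pi>'(\<cdot>|t)) \<le> k L d(s,t)\<close> by Kantorovich duality, since \<open>g(t,\<cdot>)\<close> is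
  \<open>k\<close>-Lipschitz. Neither the Bellman equation for \<open>V\<close> nor \<open>\<gamma>\<close> plays any role.\<close>

lemma lip_norm_le:
  assumes "\<And>x y. \<bar>f x - f y\<bar> \<le> k * dist x y"
  shows "lip_norm f \<le> ennreal k"
  unfolding lip_norm_def
proof (rule SUP_least, clarsimp)
  fix x y :: 'a assume "x \<noteq> y"
  then show "ennreal (\<bar>f x - f y\<bar> / dist x y) \<le> ennreal k"
    using assms[of x y] by (intro ennreal_leI) (simp add: divide_le_eq)
qed

lemma lip_norm_add: "lip_norm (\<lambda>x. f x + g x) \<le> lip_norm f + lip_norm g"
  unfolding lip_norm_def
proof (rule SUP_least, clarsimp)
  fix x y :: 'a assume "x \<noteq> y"
  then have d: "0 < dist x y" by simp
  have "\<bar>f x + g x - (f y + g y)\<bar> / dist x y \<le> \<bar>f x - f y\<bar> / dist x y + \<bar>g x - g y\<bar> / dist x y"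
    using d by (simp add: add_divide_distrib[symmetric] divide_right_mono)
  then have "ennreal (\<bar>f x + g x - (f y + g y)\<bar> / dist x y)
      \<le> ennreal (\<bar>f x - f y\<bar> / dist x y) + ennreal (\<bar>g x - g y\<bar> / dist x y)"
    by (simp add: ennreal_leI flip: ennreal_plus)
  also have "\<dots> \<le> (SUP xy\<in>{(x, y). x \<noteq> y}. ennreal (\<bar>f (fst xy) - f (snd xy)\<bar> / dist (fst xy) (snd xy)))
      + (SUP xy\<in>{(x, y). x \<noteq> y}. ennreal (\<bar>g (fst xy) - g (snd xy)\<bar> / dist (fst xy) (snd xy)))"
    using \<open>x \<noteq> y\<close> by (intro add_mono SUP_upper2[where i="(x, y)"]) auto
  finally show "ennreal (\<bar>f x + g x - (f y + g y)\<bar> / dist x y) \<le> \<dots>" .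
qed

lemma lip_norm_SA_bound:
  assumes "lip_norm_SA g \<le> ennreal k" and "0 \<le> k"
  shows "\<bar>g s a - g t b\<bar> \<le> k * (dist s t + dist a b)"
proof (cases "(s, a) = (t, b)")
  case False
  then have d: "0 < dist s t + dist a b"
    by (cases "s = t") (auto intro: add_pos_nonneg add_nonneg_pos)
  have "ennreal (\<bar>g s a - g t b\<bar> / (dist s t + dist a b)) \<le> lip_norm_SA g"
    unfolding lip_norm_SA_def using False by (intro SUP_upper2[where i="((s, a), (t, b))"]) auto
  also note assms(1)
  finally have "\<bar>g s a - g t b\<bar> / (dist s t + dist a b) \<le> k"
    using \<open>0 \<le> k\<close> by simp
  with d show ?thesis by (simp add: divide_le_eq mult.commute)
qed auto

lemma abs_integral_diff_le_wasserstein: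
  assumes W: "wasserstein \<mu> \<nu> \<le> ennreal w" and "0 \<le> w" and "0 \<le> k"
    and lip: "\<And>x y. \<bar>f x - f y\<bar> \<le> k * dist x y"
  shows "\<bar>(\<integral>x. f x \<partial>\<mu>) - (\<integral>x. f x \<partial>\<nu>)\<bar> \<le> k * w"
proof -
  \<comment> \<open>\<open>k\<close> may be \<open>0\<close>, so normalise by any \<open>c > k\<close> instead and let \<open>c\<close> decrease to \<open>k\<close>.\<close>
  have scaled: "\<bar>(\<integral>x. f x \<partial>\<mu>) - (\<integral>x. f x \<partial>\<nu>)\<bar> \<le> c * w" if "k < c" for c
  proof -
    have c: "0 < c" using that \<open>0 \<le> k\<close> by simp
    have "\<bar>f x / c - f y / c\<bar> \<le> 1 * dist x y" for x y
    proof -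
      have "\<bar>f x - f y\<bar> \<le> c * dist x y"
        using lip[of x y] that by (smt (verit) mult_right_mono zero_le_dist)
      with c show ?thesis by (simp add: diff_divide_distrib[symmetric] divide_le_eq mult.commute)
    qed
    then have "lip_norm (\<lambda>x. f x / c) \<le> 1"
      using lip_norm_le[of "\<lambda>x. f x / c" 1] by simp
    then have "ennreal \<bar>(\<integral>x. f x / c \<partial>\<mu>) - (\<integral>x. f x / c \<partial>\<nu>)\<bar> \<le> wasserstein \<mu> \<nu>"
      unfolding wasserstein_def by (intro SUP_upper) simp
    also note W
    finally have "\<bar>(\<integral>x. f x \<partial>\<mu>) - (\<integral>x. f x \<partial>\<nu>)\<bar> / c \<le> w"
      using \<open>0 \<le> w\<close> c by (simp add: ennreal_le_iff diff_divide_distrib[symmetric])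
    with c show ?thesis by (simp add: divide_le_eq mult.commute)
  qed
  show ?thesis
  proof (rule field_le_epsilon)
    fix e :: real assume "0 < e"
    have "\<bar>(\<integral>x. f x \<partial>\<mu>) - (\<integral>x. f x \<partial>\<nu>)\<bar> \<le> (k + e / (w + 1)) * w"
      using \<open>0 < e\<close> \<open>0 \<le> w\<close> by (intro scaled) simp
    also have "\<dots> \<le> k * w + e"
      using \<open>0 < e\<close> \<open>0 \<le> w\<close> by (simp add: distrib_right divide_le_eq)
    finally show "\<bar>(\<integral>x. f x \<partial>\<mu>) - (\<integral>x. f x \<partial>\<nu>)\<bar> \<le> k * w + e" .
  qed
qed

lemma (in prob_space) abs_integral_diff_le:
  fixes f g :: "'a \<Rightarrow> real"
  assumes f: "integrable M f" and g: "g \<in> borel_measurable M"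
    and bound: "\<And>x. x \<in> space M \<Longrightarrow> \<bar>f x - g x\<bar> \<le> c"
  shows "\<bar>(\<integral>x. f x \<partial>M) - (\<integral>x. g x \<partial>M)\<bar> \<le> c"
proof -
  have fg: "integrable M (\<lambda>x. f x - g x)"
    using bound f g by (intro integrable_const_bound[where B=c]) auto
  then have "integrable M g"
    using Bochner_Integration.integrable_diff[OF f fg] by simp
  then have "(\<integral>x. f x \<partial>M) - (\<integral>x. g x \<partial>M) = (\<integral>x. f x - g x \<partial>M)"
    using f by simp
  also have "\<bar>\<dots>\<bar> \<le> (\<integral>x. \<bar>f x - g x\<bar> \<partial>M)"
    by (rule integral_abs_bound)
  also have "\<dots> \<le> c"
    using fg bound by (intro integral_le_const) auto
  finally show ?thesis .
qed

lemma lip_norm_mixture_le: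
  fixes g :: "'s::metric_space \<Rightarrow> 'a::metric_space \<Rightarrow> real"
  assumes "policy \<mu>" and "lipschitz_policy L \<mu>" and "0 \<le> L"
    and g_integrable: "\<And>s. integrable (\<mu> s) (g s)"
  shows "lip_norm (\<lambda>s. \<integral>a. g s a \<partial>\<mu> s) \<le> ennreal (L + 1) * lip_norm_SA g"
proof (cases "lip_norm_SA g")
  case (real k)
  then have lip: "\<bar>g s a - g t b\<bar> \<le> k * (dist s t + dist a b)" for s t a b
    using lip_norm_SA_bound[of g k] by simp
  have lip_state: "\<bar>g s a - g t a\<bar> \<le> k * dist s t" for s t a
    using lip[where s=s and t=t and a=a and b=a] by simp
  have lip_action: "\<bar>g t a - g t b\<bar> \<le> k * dist a b" for t a b
    using lip[where s=t and t=t and a=a and b=b] by simp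
  have prob: "prob_space (\<mu> s)" and sets: "sets (\<mu> s) = sets borel" for s
    using \<open>policy \<mu>\<close> unfolding policy_def by auto
  have "\<bar>(\<integral>a. g s a \<partial>\<mu> s) - (\<integral>a. g t a \<partial>\<mu> t)\<bar> \<le> ((L + 1) * k) * dist s t" for s t
  proof -
    have "sets (\<mu> t) = sets (\<mu> s)"
      using sets by simp
    then have "g t \<in> borel_measurable (\<mu> s)"
      using borel_measurable_integrable[OF g_integrable[of t]] measurable_cong_sets[OF _ refl] by blast
    then have "\<bar>(\<integral>a. g s a \<partial>\<mu> s) - (\<integral>a. g t a \<partial>\<mu> s)\<bar> \<le> k * dist s t"
      using lip_state by (intro prob_space.abs_integral_diff_le[OF prob g_integrable]) simp
    moreover have "\<bar>(\<integral>a. g t a \<partial>\<mu> s) - (\<integral>a. g t a \<partial>\<mu> t)\<bar> \<le> k * (L * dist s t)"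
      using \<open>lipschitz_policy L \<mu>\<close> lip_action \<open>0 \<le> L\<close> \<open>0 \<le> k\<close> unfolding lipschitz_policy_def
      by (intro abs_integral_diff_le_wasserstein) auto
    ultimately show ?thesis by (simp add: algebra_simps)
  qed
  then have "lip_norm (\<lambda>s. \<integral>a. g s a \<partial>\<mu> s) \<le> ennreal ((L + 1) * k)"
    by (rule lip_norm_le)
  with real \<open>0 \<le> L\<close> show ?thesis by (simp add: ennreal_mult)
qed (use \<open>0 \<le> L\<close> in \<open>simp add: ennreal_mult_top\<close>)

lemma adv_both_eq_adv_policy_plus_adv_config:
  assumes "configuration p'"
    and "\<And>a. integrable (p' s a) (\<lambda>s'. Ufn r \<gamma> V s a s' - Qfn r \<gamma> p V s a)"
    and "integrable (\<pi>' s) (\<lambda>a. Qfn r \<gamma> p V s a - V s)"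
    and "integrable (\<pi>' s) (\<lambda>a. \<integral>s'. Ufn r \<gamma> V s a s' - V s \<partial>p' s a)"
  shows "integrable (\<pi>' s) (adv_config r \<gamma> p V p' s)"
    and "adv_both r \<gamma> V \<pi>' p' s = adv_policy r \<gamma> p V \<pi>' s + (\<integral>a. adv_config r \<gamma> p V p' s a \<partial>\<pi>' s)"
proof -
  have split: "(\<integral>s'. Ufn r \<gamma> V s a s' - V s \<partial>p' s a)
      = adv_config r \<gamma> p V p' s a + (Qfn r \<gamma> p V s a - V s)" for a
  proof -
    interpret prob_space "p' s a"
      using \<open>configuration p'\<close> unfolding configuration_def by simp
    have "(\<integral>s'. Ufn r \<gamma> V s a s' - V s \<partial>p' s a)
        = (\<integral>s'. (Ufn r \<gamma> V s a s' - Qfn r \<gamma> p V s a) + (Qfn r \<gamma> p V s a - V s) \<partial>p' s a)"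
      by simp
    also have "\<dots> = adv_config r \<gamma> p V p' s a + (\<integral>s'. Qfn r \<gamma> p V s a - V s \<partial>p' s a)"
      unfolding adv_config_def using assms(2) by (rule Bochner_Integration.integral_add) simp
    also have "\<dots> = adv_config r \<gamma> p V p' s a + (Qfn r \<gamma> p V s a - V s)"
      by (simp add: prob_space)
    finally show ?thesis .
  qed
  show integrable_adv_config: "integrable (\<pi>' s) (adv_config r \<gamma> p V p' s)"
    using Bochner_Integration.integrable_diff[OF assms(4,3)] by (simp add: split)
  show "adv_both r \<gamma> V \<pi>' p' s = adv_policy r \<gamma> p V \<pi>' s + (\<integral>a. adv_config r \<gamma> p V p' s a \<partial>\<pi>' s)"
    unfolding adv_both_def adv_policy_def split using integrable_adv_config assms(3) by simp
qed

theorem lemma5: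
  fixes r :: "'s::metric_space \<Rightarrow> 'a::metric_space \<Rightarrow> 's \<Rightarrow> real"
    and \<gamma> :: real and L :: real
    and \<pi> \<pi>' :: "'s \<Rightarrow> 'a measure"
    and p p' :: "'s \<Rightarrow> 'a \<Rightarrow> 's measure"
    and V :: "'s \<Rightarrow> real"
  assumes "0 \<le> \<gamma>" and "\<gamma> < 1"
    and "policy \<pi>" and "policy \<pi>'"
    and "configuration p" and "configuration p'"
    and "0 \<le> L" and "lipschitz_policy L \<pi>'"
    and "value_fn r \<gamma> \<pi> p V"
    and "\<forall>s. integrable (\<pi>' s) (\<lambda>a. Qfn r \<gamma> p V s a - V s)"
    and "\<forall>s a. integrable (p' s a) (\<lambda>s'. Ufn r \<gamma> V s a s' - Qfn r \<gamma> p V s a)"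
    and "\<forall>s a. integrable (p' s a) (\<lambda>s'. Ufn r \<gamma> V s a s' - V s)"
    and "\<forall>s. integrable (\<pi>' s) (\<lambda>a. \<integral>s'. Ufn r \<gamma> V s a s' - V s \<partial>p' s a)"
  shows "lip_norm (adv_both r \<gamma> V \<pi>' p')
           \<le> lip_norm (adv_policy r \<gamma> p V \<pi>') + ennreal (L + 1) * lip_norm_SA (adv_config r \<gamma> p V p')"
proof -
  let ?g = "adv_config r \<gamma> p V p'"
  note decomposition = adv_both_eq_adv_policy_plus_adv_config[OF \<open>configuration p'\<close>]
  have "adv_both r \<gamma> V \<pi>' p' = (\<lambda>s. adv_policy r \<gamma> p V \<pi>' s + (\<integral>a. ?g s a \<partial>\<pi>' s))"
    using decomposition(2) assms(10,11,13) by blast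
  then have "lip_norm (adv_both r \<gamma> V \<pi>' p')
      \<le> lip_norm (adv_policy r \<gamma> p V \<pi>') + lip_norm (\<lambda>s. \<integral>a. ?g s a \<partial>\<pi>' s)"
    by (simp add: lip_norm_add)
  also have "lip_norm (\<lambda>s. \<integral>a. ?g s a \<partial>\<pi>' s) \<le> ennreal (L + 1) * lip_norm_SA ?g"
    using decomposition(1) assms(10,11,13)
    by (intro lip_norm_mixture_le[OF \<open>policy \<pi>'\<close> \<open>lipschitz_policy L \<pi>'\<close> \<open>0 \<le> L\<close>]) blast
  finally show ?thesis by (simp add: add_left_mono)
qed

end
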